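(* Let $Q\in\mathcal N_\kappa(\mathcal H)$ have the realization $Q(z)=Q(z_0)^*+(z-\overline{z_0})\Gamma^+\big(I+(z-z_0)(A-z)^{-1}\big)\Gamma$ with $Q(z_0)$ boundedly invertible. Let $\widehat Q(z):=-Q(z)^{-1}$, $\Gamma_z:=\big(I+(z-z_0)(A-z)^{-1}\big)\Gamma$, $\widehat\Gamma:=-\Gamma Q(z_0)^{-1}$, let $\widehat A$ be the relation given by $(\widehat A-z)^{-1}=(A-z)^{-1}+\Gamma_z\widehat Q(z)\Gamma_{\overline z}^+$, and $\widehat\Gamma_z:=\big(I+(z-z_0)(\widehat A-z)^{-1}\big)\widehat\Gamma$. Let $x_0,\dots,x_{\ell-1}$ be a Jordan chain of $A$ at $\alpha\in\mathbb R$ and $x(z):=x_0+(z-\alpha)x_1+\dots+(z-\alpha)^{\ell-1}x_{\ell-1}$. Then, for all $z\in\varrho(A)\cap\varrho(\widehat A)$ at which $Q(z)$ is boundedly invertible, $$\widehat\Gamma_z\Gamma^+x(z)=\frac{-1}{z-\overline{z_0}}\Big(x(z)+(z-\alpha)^\ell\big(I+(z-\overline{z_0})(\widehat A-z)^{-1}\big)(A-\overline{z_0})^{-1}x_{\ell-1}\Big).$$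
   Context: $\mathcal H$ is a Hilbert space. $Q\in\mathcal N_\kappa(\mathcal H)$: an $\mathcal L(\mathcal H)$-valued function meromorphic in $\mathbb C\setminus\mathbb R$, $Q(\overline z)^*=Q(z)$, whose kernel $\frac{Q(z)-Q(w)^*}{z-\overline w}$ on $\mathcal D(Q)\cap\mathbb C^+$ has exactly $\kappa$ negative squares. The realization consists of a Pontryagin space $(\mathcal K,[\cdot,\cdot])$, a self-adjoint linear relation $A$ in $\mathcal K$, $z_0\in\varrho(A)\cap\mathbb C^+$ (so also $\overline{z_0}\in\varrho(A)$), and bounded $\Gamma:\mathcal H\to\mathcal K$; $\Gamma^+$ is the Pontryagin-space adjoint. A Jordan chain of $A$ at $\alpha$: $x_0\ne0$, $\{x_0,\alpha x_0\}\in A$, $\{x_j,\alpha x_j+x_{j-1}\}\in A$ for $1\le j<\ell$. *)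

theory Defs
  imports "HOL-Analysis.Analysis"
begin

class complex_vector = real_vector +
  fixes scaleC :: "complex \<Rightarrow> 'a \<Rightarrow> 'a" (infixr \<open>*\<^sub>C\<close> 75)
  assumes scaleC_add_right: "scaleC a (x + y) = scaleC a x + scaleC a y"
    and scaleC_add_left: "scaleC (a + b) x = scaleC a x + scaleC b x"
    and scaleC_scaleC: "scaleC a (scaleC b x) = scaleC (a * b) x"
    and scaleC_one: "scaleC 1 x = x"
    and scaleR_scaleC: "scaleR r x = scaleC (complex_of_real r) x"

class complex_inner = complex_vector + real_normed_vector +
  fixes cinner :: "'a \<Rightarrow> 'a \<Rightarrow> complex"
  assumes cinner_commute: "cinner x y = cnj (cinner y x)"
    and cinner_add_left: "cinner (x + y) z = cinner x z + cinner y z"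
    and cinner_scaleC_left: "cinner (scaleC c x) y = c * cinner x y"
    and cinner_real_nonneg: "Im (cinner x x) = 0 \<and> Re (cinner x x) \<ge> 0"
    and cinner_eq_zero_iff: "cinner x x = 0 \<longleftrightarrow> x = 0"
    and norm_eq_sqrt_cinner: "norm x = sqrt (Re (cinner x x))"

class chilbert_space = complex_inner + complete_space

text \<open>The classes are consistent: the complex numbers form a Hilbert space.\<close>
instantiation complex :: complex_vector
begin
definition scaleC_complex_def: "scaleC (a::complex) (x::complex) = a * x"
instance
  by standard (auto simp: scaleC_complex_def algebra_simps scaleR_conv_of_real)
end

instantiation complex :: complex_inner
begin
definition cinner_complex_def: "cinner (x::complex) y = x * cnj y"
instance
proof
  fix x y z c :: complex
  show "cinner x y = cnj (cinner y x)" by (simp add: cinner_complex_def mult.commute)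
  show "cinner (x + y) z = cinner x z + cinner y z" by (simp add: cinner_complex_def algebra_simps)
  show "cinner (c *\<^sub>C x) y = c * cinner x y" by (simp add: cinner_complex_def scaleC_complex_def)
  show "Im (cinner x x) = 0 \<and> Re (cinner x x) \<ge> 0"
    by (simp add: cinner_complex_def complex_mult_cnj)
  show "cinner x x = 0 \<longleftrightarrow> x = 0" by (simp add: cinner_complex_def)
  show "norm x = sqrt (Re (cinner x x))"
    by (simp add: cinner_complex_def complex_mult_cnj cmod_def power2_eq_square)
qed
end

instance complex :: chilbert_space ..

definition bounded_clinear :: "('a::complex_inner \<Rightarrow> 'b::complex_inner) \<Rightarrow> bool" where
  "bounded_clinear f \<longleftrightarrow> (\<forall>x y. f (x + y) = f x + f y) \<and> (\<forall>c x. f (c *\<^sub>C x) = c *\<^sub>C f x)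
     \<and> (\<exists>K. \<forall>x. norm (f x) \<le> norm x * K)"

definition bdd_invertible :: "('a::complex_inner \<Rightarrow> 'b::complex_inner) \<Rightarrow> bool" where
  "bdd_invertible T \<longleftrightarrow> bounded_clinear T \<and> bij T \<and> bounded_clinear (inv T)"

definition hadj :: "('a::complex_inner \<Rightarrow> 'a) \<Rightarrow> ('a \<Rightarrow> 'a)" where
  "hadj T = (THE S. \<forall>x y. cinner (T x) y = cinner x (S y))"

definition cspan :: "'a::complex_vector set \<Rightarrow> 'a set" where
  "cspan S = {y. \<exists>T c. finite T \<and> T \<subseteq> S \<and> y = (\<Sum>s\<in>T. c s *\<^sub>C s)}"

text \<open>A Pontryagin space is modelled as a Hilbert space together with a fundamental symmetry
  J (bounded, J o J = I, J self-adjoint) whose negative part ker(J+I) is finite-dimensional;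
  the indefinite inner product is [x,y] = (Jx,y). Every Pontryagin space arises this way,
  and the Hilbert norm induces its (unique) Pontryagin space topology.\<close>
definition pontryagin_symmetry :: "('k::complex_inner \<Rightarrow> 'k) \<Rightarrow> bool" where
  "pontryagin_symmetry J \<longleftrightarrow> bounded_clinear J \<and> (\<forall>x. J (J x) = x)
     \<and> (\<forall>x y. cinner (J x) y = cinner x (J y))
     \<and> (\<exists>S. finite S \<and> {x. J x = - x} \<subseteq> cspan S)"

definition ind :: "('k::complex_inner \<Rightarrow> 'k) \<Rightarrow> 'k \<Rightarrow> 'k \<Rightarrow> complex" where
  "ind J x y = cinner (J x) y"

definition kadj :: "('k::complex_inner \<Rightarrow> 'k) \<Rightarrow> ('h::complex_inner \<Rightarrow> 'k) \<Rightarrow> ('k \<Rightarrow> 'h)" where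
  "kadj J G = (THE S. \<forall>h k. ind J (G h) k = cinner h (S k))"

definition rel_adjoint :: "('k::complex_inner \<Rightarrow> 'k) \<Rightarrow> ('k \<times> 'k) set \<Rightarrow> ('k \<times> 'k) set" where
  "rel_adjoint J A = {(f, g). \<forall>(u, v)\<in>A. ind J v f = ind J u g}"

definition selfadjoint_rel :: "('k::complex_inner \<Rightarrow> 'k) \<Rightarrow> ('k \<times> 'k) set \<Rightarrow> bool" where
  "selfadjoint_rel J A \<longleftrightarrow> A = rel_adjoint J A"

definition shifted_inverse :: "('k::complex_vector \<times> 'k) set \<Rightarrow> complex \<Rightarrow> ('k \<times> 'k) set" where
  "shifted_inverse A z = {(g - z *\<^sub>C f, f) | f g. (f, g) \<in> A}"

definition resolvent_set :: "('k::complex_inner \<times> 'k) set \<Rightarrow> complex set" where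
  "resolvent_set A = {z. \<exists>R. bounded_clinear R \<and> (\<forall>y x. (y, x) \<in> shifted_inverse A z \<longleftrightarrow> x = R y)}"

definition resolvent :: "('k::complex_inner \<times> 'k) set \<Rightarrow> complex \<Rightarrow> ('k \<Rightarrow> 'k)" where
  "resolvent A z = (THE R. \<forall>y x. (y, x) \<in> shifted_inverse A z \<longleftrightarrow> x = R y)"

definition jordan_chain :: "('k::complex_vector \<times> 'k) set \<Rightarrow> complex \<Rightarrow> nat \<Rightarrow> (nat \<Rightarrow> 'k) \<Rightarrow> bool" where
  "jordan_chain A \<alpha> l x \<longleftrightarrow> 1 \<le> l \<and> x 0 \<noteq> 0 \<and> (x 0, \<alpha> *\<^sub>C x 0) \<in> A
     \<and> (\<forall>j. 1 \<le> j \<and> j < l \<longrightarrow> (x j, \<alpha> *\<^sub>C x j + x (j - 1)) \<in> A)"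

definition Gamma_z :: "('k::complex_inner \<times> 'k) set \<Rightarrow> complex \<Rightarrow> ('h \<Rightarrow> 'k) \<Rightarrow> complex \<Rightarrow> 'h \<Rightarrow> 'k" where
  "Gamma_z A z0 G z = (\<lambda>h. G h + (z - z0) *\<^sub>C resolvent A z (G h))"

end

theory Submission
  imports Defs
begin

text \<open>
  Inserting \<open>Q(z) - Q(z0) = (z - z0) Gamma_(cnj z)^+ Gamma\<close> into the resolvent formula for
  \<open>Ahat\<close> shows \<open>Gammahat_z = - Gamma_z Q(z)^-1\<close>. On the other hand the Jordan chain satisfies
  \<open>(A - z) x(z) = - (z - \<alpha>)^l x_(l-1)\<close>, i.e. \<open>(z - \<alpha>)^l (A - z)^-1 x_(l-1) = - x(z)\<close>, and by the
  resolvent identity \<open>w = (A - cnj z0)^-1 x_(l-1)\<close> satisfies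
  \<open>w + (z - cnj z0) (A - z)^-1 w = (A - z)^-1 x_(l-1)\<close>. With the resolvent formula for \<open>Ahat\<close>
  this turns the right-hand side into \<open>- Gamma_z Q(z)^-1 Gamma^+ x(z)\<close> as well.

  The adjoints involved exist, and \<open>cnj z0\<close> lies in the resolvent set of \<open>A\<close>, by the Riesz
  representation theorem, which follows from best approximation by closed convex sets.
\<close>

section \<open>Complex inner product spaces\<close>

text \<open>Makes the module lemmas, with their \<open>algebra_simps\<close> declarations, available for \<open>scaleC\<close>.\<close>
global_interpretation cvs: vector_space "scaleC :: complex \<Rightarrow> 'a \<Rightarrow> 'a::complex_vector"
  by unfold_locales (auto simp: scaleC_add_right scaleC_add_left scaleC_scaleC scaleC_one)

lemma cinner_add_right: "cinner x (y + z) = cinner x y + cinner x (z::'a::complex_inner)"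
  by (metis cinner_add_left cinner_commute complex_cnj_add)

lemma cinner_scaleC_right: "cinner x (c *\<^sub>C y) = cnj c * cinner x (y::'a::complex_inner)"
  by (metis cinner_commute cinner_scaleC_left complex_cnj_mult)

lemma cinner_zero_left [simp]: "cinner 0 (y::'a::complex_inner) = 0"
  using cinner_scaleC_left[of 0 0 y] by simp

lemma cinner_zero_right [simp]: "cinner y (0::'a::complex_inner) = 0"
  using cinner_commute[of y 0] by simp

lemma cinner_minus_left: "cinner (- x) (y::'a::complex_inner) = - cinner x y"
  using cinner_add_left[of x "- x" y] by (simp add: eq_neg_iff_add_eq_0 add.commute)

lemma cinner_minus_right: "cinner y (- x::'a::complex_inner) = - cinner y x"
  using cinner_add_right[of y x "- x"] by (simp add: eq_neg_iff_add_eq_0 add.commute)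

lemma cinner_diff_left: "cinner (x - z) (y::'a::complex_inner) = cinner x y - cinner z y"
  by (simp only: diff_conv_add_uminus cinner_add_left cinner_minus_left)

lemma cinner_diff_right: "cinner y (x - z::'a::complex_inner) = cinner y x - cinner y z"
  by (simp only: diff_conv_add_uminus cinner_add_right cinner_minus_right)

lemma cinner_self_norm: "cinner x x = complex_of_real ((norm (x::'a::complex_inner))\<^sup>2)"
  using cinner_real_nonneg[of x] norm_eq_sqrt_cinner[of x] by (simp add: complex_eq_iff)

lemma cinner_ext: "(\<And>h. cinner h a = cinner h b) \<Longrightarrow> a = (b::'a::complex_inner)"
  using cinner_eq_zero_iff[of "a - b"] by (simp add: cinner_diff_right)

lemma norm_diff_scaleC_square:
  fixes v w :: "'a::complex_inner"
  shows "(norm (v - c *\<^sub>C w))\<^sup>2 = (norm v)\<^sup>2 - 2 * Re (cnj c * cinner v w) + (cmod c)\<^sup>2 * (norm w)\<^sup>2"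
proof -
  define b where "b = cnj c * cinner v w"
  have "cinner (v - c *\<^sub>C w) (v - c *\<^sub>C w) = cinner v v - (b + cnj b) + (c * cnj c) * cinner w w"
    by (simp add: b_def cinner_diff_left cinner_diff_right cinner_scaleC_left cinner_scaleC_right
        cinner_commute[of w v] algebra_simps)
  also have "\<dots> = complex_of_real ((norm v)\<^sup>2 - 2 * Re b + (cmod c)\<^sup>2 * (norm w)\<^sup>2)"
    unfolding complex_add_cnj complex_norm_square[symmetric] cinner_self_norm by simp
  finally show ?thesis unfolding b_def cinner_self_norm of_real_eq_iff .
qed

lemma cinner_cauchy_schwarz: "cmod (cinner x y) \<le> norm x * norm (y::'a::complex_inner)"
proof (cases "y = 0")
  case False
  define a where "a = cinner x y"
  define r where "r = (norm y)\<^sup>2"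
  have r: "r > 0" using False by (simp add: r_def)
  define c where "c = a / complex_of_real r"
  \<comment> \<open>Pythagoras for the projection of \<open>x\<close> onto \<open>y\<close>.\<close>
  have "Re (cnj c * a) = (cmod a)\<^sup>2 / r"
    by (simp add: c_def cmod_power2 flip: power2_eq_square)
  moreover have "(cmod c)\<^sup>2 * (norm y)\<^sup>2 = (cmod a)\<^sup>2 / r"
    using r unfolding r_def[symmetric] by (simp add: c_def norm_divide power_divide power2_eq_square)
  ultimately have "(norm (x - c *\<^sub>C y))\<^sup>2 = (norm x)\<^sup>2 - (cmod a)\<^sup>2 / r"
    using norm_diff_scaleC_square[of x c y] by (simp add: a_def)
  then have "(cmod a)\<^sup>2 / r \<le> (norm x)\<^sup>2"
    using zero_le_power2[of "norm (x - c *\<^sub>C y)"] by linarith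
  then have "(cmod a)\<^sup>2 \<le> (norm x * norm y)\<^sup>2"
    using r by (simp add: pos_divide_le_eq power_mult_distrib r_def)
  then show ?thesis unfolding a_def by (rule power2_le_imp_le) simp
qed simp

lemma parallelogram_law:
  "(norm (a + b))\<^sup>2 + (norm (a - b))\<^sup>2 = 2 * (norm a)\<^sup>2 + 2 * (norm (b::'a::complex_inner))\<^sup>2"
proof -
  have "cinner (a + b) (a + b) + cinner (a - b) (a - b) = 2 * cinner a a + 2 * cinner b b"
    by (simp add: cinner_add_left cinner_add_right cinner_diff_left cinner_diff_right algebra_simps)
  then have "complex_of_real ((norm (a + b))\<^sup>2 + (norm (a - b))\<^sup>2)
      = complex_of_real (2 * (norm a)\<^sup>2 + 2 * (norm b)\<^sup>2)"
    by (simp only: cinner_self_norm of_real_add of_real_mult of_real_numeral)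
  then show ?thesis by (simp only: of_real_eq_iff)
qed

lemma norm_scaleC: "norm (c *\<^sub>C x) = cmod c * norm (x::'a::complex_inner)"
proof -
  have "complex_of_real ((norm (c *\<^sub>C x))\<^sup>2) = (c * cnj c) * cinner x x"
    unfolding cinner_self_norm[symmetric] by (simp add: cinner_scaleC_left cinner_scaleC_right)
  also have "\<dots> = complex_of_real ((cmod c * norm x)\<^sup>2)"
    by (simp add: cinner_self_norm power_mult_distrib flip: complex_norm_square)
  finally have "(norm (c *\<^sub>C x))\<^sup>2 = (cmod c * norm x)\<^sup>2"
    by (simp only: of_real_eq_iff)
  then show ?thesis by (simp add: power2_eq_iff_nonneg)
qed

lemma bounded_clinear_map_add: "bounded_clinear f \<Longrightarrow> f (x + y) = f x + f y"
  unfolding bounded_clinear_def by blast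

lemma bounded_clinear_map_scaleC: "bounded_clinear f \<Longrightarrow> f (c *\<^sub>C x) = c *\<^sub>C f x"
  unfolding bounded_clinear_def by blast

lemma bounded_clinear_nonneg_bound:
  assumes "bounded_clinear f"
  shows "\<exists>K\<ge>0. \<forall>x. norm (f x) \<le> norm x * K"
proof -
  obtain K where "\<And>x. norm (f x) \<le> norm x * K"
    using assms unfolding bounded_clinear_def by blast
  then have "norm (f x) \<le> norm x * max K 0" for x
    by (meson max.cobounded1 mult_left_mono norm_ge_zero order_trans)
  then show ?thesis by (intro exI[of _ "max K 0"]) simp
qed

lemma bounded_clinear_imp_bounded_linear:
  assumes f: "bounded_clinear f"
  shows "bounded_linear f"
proof -
  obtain K where K: "\<And>x. norm (f x) \<le> norm x * K"
    using f unfolding bounded_clinear_def by blast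
  show ?thesis
  proof (rule bounded_linear_intro[OF _ _ K])
    show "f (r *\<^sub>R x) = r *\<^sub>R f x" for r x
      by (simp only: scaleR_scaleC bounded_clinear_map_scaleC[OF f])
  qed (rule bounded_clinear_map_add[OF f])
qed

lemma bounded_clinear_map_0: "bounded_clinear f \<Longrightarrow> f 0 = 0"
  by (rule linear_0[OF bounded_linear.linear[OF bounded_clinear_imp_bounded_linear]])

lemma bounded_clinear_map_diff: "bounded_clinear f \<Longrightarrow> f (x - y) = f x - f y"
  by (rule linear_diff[OF bounded_linear.linear[OF bounded_clinear_imp_bounded_linear]])

lemma bounded_clinear_map_minus: "bounded_clinear f \<Longrightarrow> f (- x) = - f x"
  by (rule linear_neg[OF bounded_linear.linear[OF bounded_clinear_imp_bounded_linear]])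

lemma bounded_clinear_compose:
  assumes f: "bounded_clinear f" and g: "bounded_clinear g"
  shows "bounded_clinear (\<lambda>x. f (g x))"
proof -
  obtain K where K: "K \<ge> 0" "\<And>x. norm (f x) \<le> norm x * K"
    using bounded_clinear_nonneg_bound[OF f] by blast
  obtain L where L: "\<And>x. norm (g x) \<le> norm x * L"
    using g unfolding bounded_clinear_def by blast
  show ?thesis
    unfolding bounded_clinear_def
  proof (intro conjI allI exI)
    show "norm (f (g x)) \<le> norm x * (L * K)" for x
      using order_trans[OF K(2) mult_right_mono[OF L K(1)]] by (simp add: mult.assoc)
  qed (simp_all add: f g bounded_clinear_map_add bounded_clinear_map_scaleC)
qed

lemma bounded_clinear_add:
  assumes f: "bounded_clinear f" and g: "bounded_clinear g"
  shows "bounded_clinear (\<lambda>x. f x + g x)"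
proof -
  obtain K L where K: "\<And>x. norm (f x) \<le> norm x * K" and L: "\<And>x. norm (g x) \<le> norm x * L"
    using f g unfolding bounded_clinear_def by blast
  show ?thesis
    unfolding bounded_clinear_def
  proof (intro conjI allI exI)
    show "norm (f x + g x) \<le> norm x * (K + L)" for x
      using norm_triangle_ineq[of "f x" "g x"] K[of x] L[of x] by (simp add: algebra_simps)
  qed (simp_all add: f g bounded_clinear_map_add bounded_clinear_map_scaleC algebra_simps)
qed

lemma bounded_clinear_const_scaleC:
  assumes f: "bounded_clinear f"
  shows "bounded_clinear (\<lambda>x. c *\<^sub>C f x)"
proof -
  obtain K where K: "\<And>x. norm (f x) \<le> norm x * K"
    using f unfolding bounded_clinear_def by blast
  show ?thesis
    unfolding bounded_clinear_def
  proof (intro conjI allI exI)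
    show "norm (c *\<^sub>C f x) \<le> norm x * (cmod c * K)" for x
      using mult_left_mono[OF K[of x], of "cmod c"] by (simp add: norm_scaleC algebra_simps)
  qed (simp_all add: f bounded_clinear_map_add bounded_clinear_map_scaleC algebra_simps mult.commute)
qed

section \<open>Riesz representation and adjoints\<close>

lemma best_approximation_orthogonal:
  fixes v :: "'a::complex_inner"
  assumes min: "\<And>n. n \<in> N \<Longrightarrow> norm v \<le> norm (v - n)"
    and scale: "\<And>c n. n \<in> N \<Longrightarrow> c *\<^sub>C n \<in> N"
    and m: "m \<in> N"
  shows "cinner v m = 0"
proof -
  define a where "a = cinner v m"
  define M where "M = (norm m)\<^sup>2"
  define e where "e = 1 / (M + 1)"
  have M: "M \<ge> 0" by (simp add: M_def)
  then have e: "e > 0" "e * M < 1" by (simp_all add: e_def)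
  \<comment> \<open>Moving \<open>v\<close> a little in the direction of \<open>m\<close> would shorten it unless \<open>a = 0\<close>.\<close>
  have "Re (cnj (complex_of_real e * a) * a) = e * (cmod a)\<^sup>2"
    by (simp add: cmod_power2 algebra_simps flip: power2_eq_square)
  moreover have "(cmod (complex_of_real e * a))\<^sup>2 = e\<^sup>2 * (cmod a)\<^sup>2"
    using e by (simp add: norm_mult power_mult_distrib)
  ultimately have "(norm (v - (complex_of_real e * a) *\<^sub>C m))\<^sup>2 = (norm v)\<^sup>2 - e * (2 - e * M) * (cmod a)\<^sup>2"
    using norm_diff_scaleC_square[of v "complex_of_real e * a" m]
    by (simp add: a_def M_def algebra_simps power2_eq_square)
  moreover have "(norm v)\<^sup>2 \<le> (norm (v - (complex_of_real e * a) *\<^sub>C m))\<^sup>2"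
    using min[OF scale[OF m]] by (simp add: power_mono)
  ultimately have "e * (2 - e * M) * (cmod a)\<^sup>2 \<le> 0" by linarith
  moreover have "e * (2 - e * M) > 0" using e by simp
  ultimately have "\<not> (cmod a)\<^sup>2 > 0" by (metis leD mult_pos_pos)
  then show ?thesis by (simp add: a_def)
qed

lemma minimizing_sequence_Cauchy:
  fixes s :: "nat \<Rightarrow> 'a::complex_inner"
  assumes d: "0 \<le> d" and mid: "\<And>j k. d \<le> norm (u - (1/2) *\<^sub>R (s j + s k))"
    and s: "\<And>k. (norm (u - s k))\<^sup>2 < d\<^sup>2 + 1 / real (Suc k)"
  shows "Cauchy s"
proof (rule CauchyI)
  have close: "(norm (s j - s k))\<^sup>2 < 2 / real (Suc j) + 2 / real (Suc k)" for j k
  proof -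
    have "u - s j + (u - s k) = 2 *\<^sub>R (u - (1/2) *\<^sub>R (s j + s k))"
      by (simp add: algebra_simps scaleR_2)
    then have "(2 * d)\<^sup>2 \<le> (norm (u - s j + (u - s k)))\<^sup>2"
      using mid[of j k] d by (simp add: power_mono)
    moreover have "norm (s j - s k) = norm (u - s j - (u - s k))"
      by (simp add: norm_minus_commute)
    ultimately show ?thesis
      using parallelogram_law[of "u - s j" "u - s k"] s[of j] s[of k] by (simp add: power_mult_distrib)
  qed
  fix e :: real assume e: "0 < e"
  obtain M :: nat where M: "4 / e\<^sup>2 < real (Suc M)"
    using reals_Archimedean2 by (metis add.commute less_add_one of_nat_Suc order_less_trans)
  have "(norm (s j - s k))\<^sup>2 < e\<^sup>2" if "M \<le> j" "M \<le> k" for j k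
  proof -
    have "2 / real (Suc j) \<le> 2 / real (Suc M)" "2 / real (Suc k) \<le> 2 / real (Suc M)"
      using that by (simp_all add: divide_left_mono)
    then have "2 / real (Suc j) + 2 / real (Suc k) \<le> 4 / real (Suc M)" by simp
    also have "\<dots> < e\<^sup>2" using M e by (simp add: field_simps)
    finally show ?thesis using close[of j k] by linarith
  qed
  then show "\<exists>M. \<forall>j\<ge>M. \<forall>k\<ge>M. norm (s j - s k) < e"
    using e by (meson power_less_imp_less_base less_imp_le)
qed

lemma best_approximation_exists:
  fixes N :: "'a::chilbert_space set"
  assumes "closed N" "convex N" "N \<noteq> {}"
  shows "\<exists>n0\<in>N. \<forall>n\<in>N. norm (u - n0) \<le> norm (u - n)"
proof -
  define d where "d = Inf ((\<lambda>n. norm (u - n)) ` N)"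
  have bdd: "bdd_below ((\<lambda>n. norm (u - n)) ` N)" by (rule bdd_belowI[of _ 0]) auto
  have d_le: "d \<le> norm (u - n)" if "n \<in> N" for n
    unfolding d_def by (rule cInf_lower[OF _ bdd]) (use that in blast)
  have d: "0 \<le> d" unfolding d_def using \<open>N \<noteq> {}\<close> by (auto intro: cInf_greatest)
  have "\<exists>n\<in>N. (norm (u - n))\<^sup>2 < d\<^sup>2 + 1 / real (Suc k)" for k
  proof -
    have "d < sqrt (d\<^sup>2 + 1 / real (Suc k))"
      using d real_sqrt_less_mono[of "d\<^sup>2" "d\<^sup>2 + 1 / real (Suc k)"] by simp
    then obtain n where "n \<in> N" "norm (u - n) < sqrt (d\<^sup>2 + 1 / real (Suc k))"
      using cInf_lessD[of "(\<lambda>n. norm (u - n)) ` N"] \<open>N \<noteq> {}\<close> by (auto simp: d_def)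
    then show ?thesis
      by (metis norm_ge_zero power_strict_mono real_sqrt_pow2 zero_le_power2 add_nonneg_nonneg
          of_nat_0_le_iff divide_nonneg_nonneg zero_le_one zero_less_numeral)
  qed
  then obtain s where s: "\<And>k. s k \<in> N" "\<And>k. (norm (u - s k))\<^sup>2 < d\<^sup>2 + 1 / real (Suc k)"
    by metis
  have "d \<le> norm (u - (1/2) *\<^sub>R (s j + s k))" for j k
    using d_le convexD[OF \<open>convex N\<close> s(1)[of j] s(1)[of k], of "1/2" "1/2"]
    by (simp add: scaleR_right_distrib)
  then have "Cauchy s" using minimizing_sequence_Cauchy[OF d _ s(2)] by blast
  then obtain n0 where lim: "s \<longlonglongrightarrow> n0" using Cauchy_convergent convergent_def by blast
  have "(norm (u - n0))\<^sup>2 \<le> d\<^sup>2"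
  proof (rule LIMSEQ_le)
    show "(\<lambda>k. (norm (u - s k))\<^sup>2) \<longlonglongrightarrow> (norm (u - n0))\<^sup>2" by (intro tendsto_intros lim)
    show "(\<lambda>k. d\<^sup>2 + inverse (real (Suc k))) \<longlonglongrightarrow> d\<^sup>2" by (rule LIMSEQ_inverse_real_of_nat_add)
    show "\<exists>N. \<forall>n\<ge>N. (norm (u - s n))\<^sup>2 \<le> d\<^sup>2 + inverse (real (Suc n))"
      using s(2) by (metis inverse_eq_divide less_imp_le)
  qed
  then have "norm (u - n0) \<le> d" using d by (rule power2_le_imp_le)
  moreover have "n0 \<in> N" using closed_sequentially[OF \<open>closed N\<close> s(1) lim] .
  ultimately show ?thesis using d_le by (meson order_trans)
qed

lemma riesz_representation:
  fixes f :: "'a::chilbert_space \<Rightarrow> complex"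
  assumes f: "bounded_clinear f"
  shows "\<exists>s. \<forall>h. f h = cinner h s"
proof (cases "\<forall>h. f h = 0")
  case False
  then obtain u where fu: "f u \<noteq> 0" by blast
  have bl: "bounded_linear f" by (rule bounded_clinear_imp_bounded_linear[OF f])
  define N where "N = f -` {0}"
  have "closed N"
    unfolding N_def by (rule closed_vimage[OF closed_singleton linear_continuous_on[OF bl]])
  moreover have "convex N"
    unfolding N_def by (rule convex_linear_vimage[OF bounded_linear.linear[OF bl] convex_singleton])
  moreover have "0 \<in> N" by (simp add: N_def bounded_clinear_map_0[OF f])
  ultimately obtain n0 where n0: "n0 \<in> N" "\<And>n. n \<in> N \<Longrightarrow> norm (u - n0) \<le> norm (u - n)"
    using best_approximation_exists[of N u] by blast
  \<comment> \<open>The representing vector is a multiple of the component \<open>v\<close> of \<open>u\<close> orthogonal to \<open>ker f\<close>.\<close>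
  define v where "v = u - n0"
  have orth: "cinner v m = 0" if "m \<in> N" for m
  proof (rule best_approximation_orthogonal[OF _ _ that])
    show "norm v \<le> norm (v - n)" if "n \<in> N" for n
      using n0 that by (simp add: v_def N_def bounded_clinear_map_add[OF f] diff_diff_eq)
    show "c *\<^sub>C n \<in> N" if "n \<in> N" for c n
      using that by (simp add: N_def bounded_clinear_map_scaleC[OF f] scaleC_complex_def)
  qed
  have fv: "f v = f u" using n0(1) by (simp add: v_def bounded_clinear_map_diff[OF f] N_def)
  then have "cinner v v \<noteq> 0" using fu bounded_clinear_map_0[OF f] by (auto simp: cinner_eq_zero_iff)
  moreover have "f y * cinner v v = f v * cinner y v" for y
  proof -
    define c where "c = f y / f v"
    have "y - c *\<^sub>C v \<in> N"
      using fv fu by (simp add: N_def bounded_clinear_map_diff[OF f] bounded_clinear_map_scaleC[OF f]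
          scaleC_complex_def c_def)
    then have "cinner y v = c * cinner v v"
      using orth cinner_commute[of "y - c *\<^sub>C v" v] by (simp add: cinner_diff_left cinner_scaleC_left)
    then show ?thesis using fu fv by (simp add: c_def)
  qed
  ultimately have "f h = cinner h (cnj (f v / cinner v v) *\<^sub>C v)" for h
    by (simp add: cinner_scaleC_right field_simps)
  then show ?thesis by blast
qed (intro exI[of _ 0], simp)

lemma adjoint_exists:
  fixes F :: "'a::chilbert_space \<Rightarrow> 'b::complex_inner"
  assumes F: "bounded_clinear F"
  shows "\<exists>S. bounded_clinear S \<and> (\<forall>h k. cinner (F h) k = cinner h (S k))"
proof -
  obtain K where K: "K \<ge> 0" "\<And>x. norm (F x) \<le> norm x * K"
    using bounded_clinear_nonneg_bound[OF F] by blast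
  have "\<exists>s. \<forall>h. cinner (F h) k = cinner h s" for k
  proof (rule riesz_representation)
    show "bounded_clinear (\<lambda>h. cinner (F h) k)"
      unfolding bounded_clinear_def
    proof (intro conjI allI exI)
      show "norm (cinner (F x) k) \<le> norm x * (K * norm k)" for x
        using order_trans[OF cinner_cauchy_schwarz mult_right_mono[OF K(2) norm_ge_zero]]
        by (simp add: mult.assoc)
    qed (simp_all add: bounded_clinear_map_add[OF F] bounded_clinear_map_scaleC[OF F]
        cinner_add_left cinner_scaleC_left scaleC_complex_def)
  qed
  then obtain S where S: "\<And>h k. cinner (F h) k = cinner h (S k)" by metis
  have "bounded_clinear S"
    unfolding bounded_clinear_def
  proof (intro conjI allI exI)
    show "S (x + y) = S x + S y" for x y
      by (rule cinner_ext) (simp add: S[symmetric] cinner_add_right)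
    show "S (c *\<^sub>C x) = c *\<^sub>C S x" for c x
      by (rule cinner_ext) (simp add: S[symmetric] cinner_scaleC_right)
    show "norm (S k) \<le> norm k * K" for k
    proof -
      have "(norm (S k))\<^sup>2 = Re (cinner (F (S k)) k)" by (simp add: S cinner_self_norm)
      also have "\<dots> \<le> norm (F (S k)) * norm k"
        using complex_Re_le_cmod order_trans cinner_cauchy_schwarz by blast
      also have "\<dots> \<le> norm (S k) * (norm k * K)"
        using mult_right_mono[OF K(2) norm_ge_zero] by (simp add: algebra_simps)
      finally show ?thesis
        by (cases "S k = 0") (use K(1) in \<open>simp_all add: power2_eq_square\<close>)
    qed
  qed
  then show ?thesis using S by blast
qed

lemma kadj_eqI:
  assumes "\<And>h k. ind J (X h) k = cinner h (S k)"
  shows "kadj J X = S"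
  unfolding kadj_def
proof (rule the_equality)
  fix S' assume "\<forall>h k. ind J (X h) k = cinner h (S' k)"
  then show "S' = S" using assms by (metis cinner_ext ext)
qed (use assms in blast)

section \<open>Self-adjoint relations in Pontryagin spaces\<close>

locale pontryagin_space =
  fixes J :: "'k::chilbert_space \<Rightarrow> 'k"
  assumes pontryagin_symmetry: "pontryagin_symmetry J"
begin

lemma J_bounded: "bounded_clinear J"
  and J_involution: "J (J x) = x"
  and J_selfadjoint: "cinner (J x) y = cinner x (J y)"
  using pontryagin_symmetry unfolding pontryagin_symmetry_def by blast+

lemma ind_add_left: "ind J (x + y) z = ind J x z + ind J y z"
  by (simp add: ind_def bounded_clinear_map_add[OF J_bounded] cinner_add_left)

lemma ind_add_right: "ind J x (y + z) = ind J x y + ind J x z"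
  by (simp add: ind_def cinner_add_right)

lemma ind_scaleC_left: "ind J (c *\<^sub>C x) y = c * ind J x y"
  by (simp add: ind_def bounded_clinear_map_scaleC[OF J_bounded] cinner_scaleC_left)

lemma ind_scaleC_right: "ind J x (c *\<^sub>C y) = cnj c * ind J x y"
  by (simp add: ind_def cinner_scaleC_right)

lemma ind_nondegenerate:
  assumes "\<And>y. ind J y e = 0"
  shows "e = 0"
proof -
  have "cinner e e = ind J (J e) e" by (simp add: ind_def J_involution)
  then show ?thesis using assms cinner_eq_zero_iff[of e] by simp
qed

lemma
  fixes G :: "'h::chilbert_space \<Rightarrow> 'k"
  assumes "bounded_clinear G"
  shows bounded_clinear_kadj: "bounded_clinear (kadj J G)"
    and ind_kadj: "ind J (G h) k = cinner h (kadj J G k)"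
proof -
  obtain S where S: "bounded_clinear S" "\<And>h k. cinner (J (G h)) k = cinner h (S k)"
    using adjoint_exists[OF bounded_clinear_compose[OF J_bounded assms]] by blast
  have "kadj J G = S" by (rule kadj_eqI) (simp add: ind_def S)
  with S show "bounded_clinear (kadj J G)" "ind J (G h) k = cinner h (kadj J G k)"
    by (simp_all add: ind_def)
qed

end

lemma resolvent_setD:
  assumes "w \<in> resolvent_set A"
  shows "bounded_clinear (resolvent A w)"
    and "(y, x) \<in> shifted_inverse A w \<longleftrightarrow> x = resolvent A w y"
proof -
  obtain R where R: "bounded_clinear R" "\<And>y x. (y, x) \<in> shifted_inverse A w \<longleftrightarrow> x = R y"
    using assms unfolding resolvent_set_def by blast
  have "resolvent A w = R"
    unfolding resolvent_def
  proof (rule the_equality)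
    fix R' assume R': "\<forall>y x. (y, x) \<in> shifted_inverse A w \<longleftrightarrow> x = R' y"
    show "R' = R"
    proof
      fix y show "R' y = R y" using R' R(2)[of y "R y"] by simp
    qed
  qed (use R(2) in blast)
  with R show "bounded_clinear (resolvent A w)"
    and "(y, x) \<in> shifted_inverse A w \<longleftrightarrow> x = resolvent A w y" by simp_all
qed

lemma resolvent_in_relation:
  assumes "w \<in> resolvent_set A"
  shows "(resolvent A w y, y + w *\<^sub>C resolvent A w y) \<in> A"
proof -
  have "(y, resolvent A w y) \<in> shifted_inverse A w" using resolvent_setD(2)[OF assms] by blast
  then obtain g where g: "y = g - w *\<^sub>C resolvent A w y" "(resolvent A w y, g) \<in> A"
    unfolding shifted_inverse_def by auto
  have "g = y + w *\<^sub>C resolvent A w y"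
    using arg_cong[OF g(1), of "\<lambda>v. v + w *\<^sub>C resolvent A w y"] by simp
  with g(2) show ?thesis by simp
qed

lemma resolvent_apply:
  assumes "w \<in> resolvent_set A" and "(f, g) \<in> A"
  shows "resolvent A w (g - w *\<^sub>C f) = f"
proof -
  have "(g - w *\<^sub>C f, f) \<in> shifted_inverse A w" unfolding shifted_inverse_def using assms(2) by blast
  then show ?thesis using resolvent_setD(2)[OF assms(1)] by simp
qed

lemma resolvent_identity:
  assumes w: "w \<in> resolvent_set A" and z: "z \<in> resolvent_set A"
  shows "resolvent A w b + (z - w) *\<^sub>C resolvent A z (resolvent A w b) = resolvent A z b"
proof -
  let ?r = "resolvent A w b"
  have R: "bounded_clinear (resolvent A z)" by (rule resolvent_setD(1)[OF z])
  have "resolvent A z ((b + w *\<^sub>C ?r) - z *\<^sub>C ?r) = ?r"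
    by (rule resolvent_apply[OF z resolvent_in_relation[OF w]])
  moreover have "(b + w *\<^sub>C ?r) - z *\<^sub>C ?r = b - (z - w) *\<^sub>C ?r"
    by (simp add: algebra_simps)
  ultimately have "resolvent A z b - (z - w) *\<^sub>C resolvent A z ?r = ?r"
    by (simp only: bounded_clinear_map_diff[OF R] bounded_clinear_map_scaleC[OF R])
  then show ?thesis by (simp add: diff_eq_eq)
qed

locale selfadjoint_relation = pontryagin_space J for J :: "'k::chilbert_space \<Rightarrow> 'k" +
  fixes A :: "('k \<times> 'k) set"
  assumes selfadjoint: "selfadjoint_rel J A"
begin

lemma selfadjoint_symmetric:
  assumes "(u, v) \<in> A" and "(f, g) \<in> A"
  shows "ind J v f = ind J u g"
proof -
  have "(f, g) \<in> rel_adjoint J A" using assms(2) selfadjoint unfolding selfadjoint_rel_def by simp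
  then show ?thesis using assms(1) unfolding rel_adjoint_def by auto
qed

lemma selfadjoint_memI:
  assumes "\<And>u v. (u, v) \<in> A \<Longrightarrow> ind J v f = ind J u g"
  shows "(f, g) \<in> A"
proof -
  have "(f, g) \<in> rel_adjoint J A" using assms unfolding rel_adjoint_def by auto
  then show ?thesis using selfadjoint unfolding selfadjoint_rel_def by simp
qed

lemma relation_add:
  assumes "(f, g) \<in> A" and "(f', g') \<in> A"
  shows "(f + f', g + g') \<in> A"
proof (rule selfadjoint_memI)
  fix u v assume uv: "(u, v) \<in> A"
  show "ind J v (f + f') = ind J u (g + g')"
    unfolding ind_add_right selfadjoint_symmetric[OF uv assms(1)] selfadjoint_symmetric[OF uv assms(2)] ..
qed

lemma relation_scaleC:
  assumes "(f, g) \<in> A"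
  shows "(c *\<^sub>C f, c *\<^sub>C g) \<in> A"
proof (rule selfadjoint_memI)
  fix u v assume uv: "(u, v) \<in> A"
  show "ind J v (c *\<^sub>C f) = ind J u (c *\<^sub>C g)"
    unfolding ind_scaleC_right selfadjoint_symmetric[OF uv assms] ..
qed

text \<open>With \<open>t = z - a\<close> this says \<open>(A - z) x(z) = -t\<^sup>l x\<^sub>l\<^sub>-\<^sub>1\<close> for the Jordan chain sum \<open>x(z)\<close>.\<close>
lemma jordan_chain_sum:
  assumes chain: "jordan_chain A a l x"
  shows "((\<Sum>j<l. t ^ j *\<^sub>C x j), (a + t) *\<^sub>C (\<Sum>j<l. t ^ j *\<^sub>C x j) - t ^ l *\<^sub>C x (l - 1)) \<in> A"
proof -
  have l: "1 \<le> l" and x0: "(x 0, a *\<^sub>C x 0) \<in> A"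
    and xj: "\<And>j. 1 \<le> j \<Longrightarrow> j < l \<Longrightarrow> (x j, a *\<^sub>C x j + x (j - 1)) \<in> A"
    using chain unfolding jordan_chain_def by auto
  define s where "s n = (\<Sum>j<n. t ^ j *\<^sub>C x j)" for n
  have "(s (Suc m), (a + t) *\<^sub>C s (Suc m) - t ^ Suc m *\<^sub>C x m) \<in> A" if "m < l" for m
    using that
  proof (induction m)
    case 0
    have "(a + t) *\<^sub>C x 0 - t *\<^sub>C x 0 = a *\<^sub>C x 0" by (simp add: algebra_simps)
    then show ?case using x0 by (simp add: s_def)
  next
    case (Suc m)
    have "(s (Suc m) + t ^ Suc m *\<^sub>C x (Suc m),
        ((a + t) *\<^sub>C s (Suc m) - t ^ Suc m *\<^sub>C x m) + t ^ Suc m *\<^sub>C (a *\<^sub>C x (Suc m) + x m)) \<in> A"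
      using Suc xj[of "Suc m"] by (intro relation_add relation_scaleC) simp_all
    moreover have s_Suc: "s (Suc (Suc m)) = s (Suc m) + t ^ Suc m *\<^sub>C x (Suc m)" by (simp add: s_def)
    moreover have "(a + t) *\<^sub>C s (Suc (Suc m)) - t ^ Suc (Suc m) *\<^sub>C x (Suc m)
        = ((a + t) *\<^sub>C s (Suc m) - t ^ Suc m *\<^sub>C x m) + t ^ Suc m *\<^sub>C (a *\<^sub>C x (Suc m) + x m)"
      unfolding s_Suc by (simp add: algebra_simps)
    ultimately show ?case by simp
  qed
  from this[of "l - 1"] l show ?thesis by (simp add: s_def)
qed

lemma resolvent_jordan_chain_sum:
  assumes chain: "jordan_chain A a l x" and z: "z \<in> resolvent_set A"
  shows "(z - a) ^ l *\<^sub>C resolvent A z (x (l - 1)) = - (\<Sum>j<l. (z - a) ^ j *\<^sub>C x j)"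
proof -
  let ?x = "\<Sum>j<l. (z - a) ^ j *\<^sub>C x j"
  have R: "bounded_clinear (resolvent A z)" by (rule resolvent_setD(1)[OF z])
  have "resolvent A z ((z *\<^sub>C ?x - (z - a) ^ l *\<^sub>C x (l - 1)) - z *\<^sub>C ?x) = ?x"
    using resolvent_apply[OF z jordan_chain_sum[OF chain, of "z - a"]] by simp
  then have "- ((z - a) ^ l *\<^sub>C resolvent A z (x (l - 1))) = ?x"
    by (simp add: bounded_clinear_map_minus[OF R] bounded_clinear_map_scaleC[OF R])
  then show ?thesis by (simp add: minus_equation_iff)
qed

lemma eigenvector_at_cnj_resolvent_point:
  assumes w: "w \<in> resolvent_set A" and e: "(e, cnj w *\<^sub>C e) \<in> A"
  shows "e = 0"
proof (rule ind_nondegenerate)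
  fix y
  let ?R = "resolvent A w y"
  have "ind J (y + w *\<^sub>C ?R) e = ind J ?R (cnj w *\<^sub>C e)"
    by (rule selfadjoint_symmetric[OF resolvent_in_relation[OF w] e])
  then have "ind J y e + w * ind J ?R e = 0 + w * ind J ?R e"
    by (simp only: ind_add_left ind_scaleC_left ind_scaleC_right complex_cnj_cnj add_0_left)
  then show "ind J y e = 0" by (rule add_right_imp_eq)
qed

lemma resolvent_set_cnj:
  assumes w: "w \<in> resolvent_set A"
  shows "cnj w \<in> resolvent_set A"
proof -
  let ?R = "resolvent A w"
  obtain S where S: "bounded_clinear S" "\<And>h k. cinner (?R h) k = cinner h (S k)"
    using adjoint_exists[OF resolvent_setD(1)[OF w]] by blast
  \<comment> \<open>The candidate for \<open>(A - cnj w)\<^sup>-\<^sup>1\<close> is the Pontryagin-space adjoint of \<open>(A - w)\<^sup>-\<^sup>1\<close>.\<close>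
  define T where "T = (\<lambda>y. J (S (J y)))"
  have T: "bounded_clinear T"
    unfolding T_def by (rule bounded_clinear_compose[OF J_bounded bounded_clinear_compose[OF S(1) J_bounded]])
  have T_adjoint: "ind J a (T y) = ind J (?R a) y" for a y
  proof -
    have "ind J a (T y) = cinner (J (J a)) (S (J y))" by (simp add: ind_def T_def J_selfadjoint)
    also have "\<dots> = cinner (?R a) (J y)" by (simp add: J_involution S(2))
    finally show ?thesis by (simp add: ind_def J_selfadjoint)
  qed
  have T_in: "(T y, y + cnj w *\<^sub>C T y) \<in> A" for y
  proof (rule selfadjoint_memI)
    fix u v assume uv: "(u, v) \<in> A"
    have "ind J v (T y) = ind J (v - w *\<^sub>C u) (T y) + w * ind J u (T y)"
      using ind_add_left[of "v - w *\<^sub>C u" "w *\<^sub>C u" "T y"] ind_scaleC_left[of w u "T y"] by simp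
    also have "\<dots> = ind J u y + w * ind J u (T y)"
      by (simp only: T_adjoint resolvent_apply[OF w uv])
    also have "\<dots> = ind J u (y + cnj w *\<^sub>C T y)"
      by (simp add: ind_add_right ind_scaleC_right)
    finally show "ind J v (T y) = ind J u (y + cnj w *\<^sub>C T y)" .
  qed
  have "(y, x) \<in> shifted_inverse A (cnj w) \<longleftrightarrow> x = T y" for y x
  proof
    assume "(y, x) \<in> shifted_inverse A (cnj w)"
    then obtain g where g: "y = g - cnj w *\<^sub>C x" "(x, g) \<in> A"
      unfolding shifted_inverse_def by auto
    have "(x + (-1) *\<^sub>C T y, g + (-1) *\<^sub>C (y + cnj w *\<^sub>C T y)) \<in> A"
      by (rule relation_add[OF g(2) relation_scaleC[OF T_in]])
    moreover have "g + (-1) *\<^sub>C (y + cnj w *\<^sub>C T y) = cnj w *\<^sub>C (x - T y)"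
      using g(1) by (simp add: algebra_simps)
    ultimately have "(x - T y, cnj w *\<^sub>C (x - T y)) \<in> A" by (simp add: algebra_simps)
    then have "x - T y = 0" by (rule eigenvector_at_cnj_resolvent_point[OF w])
    then show "x = T y" by simp
  next
    assume "x = T y"
    moreover have "y = (y + cnj w *\<^sub>C T y) - cnj w *\<^sub>C T y" by simp
    ultimately show "(y, x) \<in> shifted_inverse A (cnj w)"
      unfolding shifted_inverse_def using T_in[of y] by blast
  qed
  with T show ?thesis unfolding resolvent_set_def by blast
qed

lemma resolvent_adjoint:
  assumes w: "w \<in> resolvent_set A"
  shows "ind J (resolvent A (cnj w) b) a = ind J b (resolvent A w a)"
proof -
  let ?R = "resolvent A w" and ?Rc = "resolvent A (cnj w)"
  have "ind J (b + cnj w *\<^sub>C ?Rc b) (?R a) = ind J (?Rc b) (a + w *\<^sub>C ?R a)"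
    by (rule selfadjoint_symmetric[OF resolvent_in_relation[OF resolvent_set_cnj[OF w]]
          resolvent_in_relation[OF w]])
  then have "ind J b (?R a) + cnj w * ind J (?Rc b) (?R a) = ind J (?Rc b) a + cnj w * ind J (?Rc b) (?R a)"
    by (simp only: ind_add_left ind_scaleC_left ind_add_right ind_scaleC_right)
  then show ?thesis by (rule add_right_imp_eq[symmetric])
qed

end

section \<open>Realizations of generalized Nevanlinna functions\<close>

locale realization = selfadjoint_relation J A for J :: "'k::chilbert_space \<Rightarrow> 'k" and A +
  fixes G :: "'h::chilbert_space \<Rightarrow> 'k" and Q :: "complex \<Rightarrow> 'h \<Rightarrow> 'h" and z0 :: complex
  assumes z0_resolvent: "z0 \<in> resolvent_set A"
    and G_bounded: "bounded_clinear G"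
    and Q_realization: "\<forall>w\<in>resolvent_set A.
      Q w = (\<lambda>h. hadj (Q z0) h + (w - cnj z0) *\<^sub>C kadj J G (Gamma_z A z0 G w h))"
begin

lemma bounded_clinear_Gamma_z:
  assumes "z \<in> resolvent_set A"
  shows "bounded_clinear (Gamma_z A z0 G z)"
  unfolding Gamma_z_def
  by (rule bounded_clinear_add[OF G_bounded bounded_clinear_const_scaleC[OF
        bounded_clinear_compose[OF resolvent_setD(1)[OF assms] G_bounded]]])

lemma kadj_Gamma_z_cnj:
  assumes z: "z \<in> resolvent_set A"
  shows "kadj J (Gamma_z A z0 G (cnj z))
    = (\<lambda>k. kadj J G k + (z - cnj z0) *\<^sub>C kadj J G (resolvent A z k))"
proof (rule kadj_eqI)
  fix h k
  have "ind J (Gamma_z A z0 G (cnj z) h) k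
      = ind J (G h) k + (cnj z - z0) * ind J (resolvent A (cnj z) (G h)) k"
    unfolding Gamma_z_def by (simp only: ind_add_left ind_scaleC_left)
  also have "\<dots> = cinner h (kadj J G k) + (cnj z - z0) * cinner h (kadj J G (resolvent A z k))"
    by (simp only: resolvent_adjoint[OF z] ind_kadj[OF G_bounded])
  also have "\<dots> = cinner h (kadj J G k + (z - cnj z0) *\<^sub>C kadj J G (resolvent A z k))"
    by (simp add: cinner_add_right cinner_scaleC_right)
  finally show "ind J (Gamma_z A z0 G (cnj z) h) k
      = cinner h (kadj J G k + (z - cnj z0) *\<^sub>C kadj J G (resolvent A z k))" .
qed

lemma bounded_clinear_kadj_Gamma_z_cnj:
  assumes z: "z \<in> resolvent_set A"
  shows "bounded_clinear (kadj J (Gamma_z A z0 G (cnj z)))"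
proof -
  have P: "bounded_clinear (kadj J G)" by (rule bounded_clinear_kadj[OF G_bounded])
  show ?thesis
    unfolding kadj_Gamma_z_cnj[OF z]
    by (rule bounded_clinear_add[OF P bounded_clinear_const_scaleC[OF
          bounded_clinear_compose[OF P resolvent_setD(1)[OF z]]]])
qed

lemma Q_minus_Q_z0:
  assumes z: "z \<in> resolvent_set A"
  shows "Q z h - Q z0 h = (z - z0) *\<^sub>C kadj J (Gamma_z A z0 G (cnj z)) (G h)"
proof -
  let ?P = "kadj J G"
  have P: "bounded_clinear ?P" by (rule bounded_clinear_kadj[OF G_bounded])
  have Qz: "Q z h = hadj (Q z0) h + (z - cnj z0) *\<^sub>C (?P (G h) + (z - z0) *\<^sub>C ?P (resolvent A z (G h)))"
    using fun_cong[OF bspec[OF Q_realization z], of h]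
    by (simp add: Gamma_z_def bounded_clinear_map_add[OF P] bounded_clinear_map_scaleC[OF P])
  have Qz0: "Q z0 h = hadj (Q z0) h + (z0 - cnj z0) *\<^sub>C ?P (G h)"
    using fun_cong[OF bspec[OF Q_realization z0_resolvent], of h] by (simp add: Gamma_z_def)
  show ?thesis
    unfolding Qz Qz0 by (simp add: kadj_Gamma_z_cnj[OF z] algebra_simps)
qed

context
  fixes Ahat z
  assumes z: "z \<in> resolvent_set A" and Qz: "bdd_invertible (Q z)"
    and resolvent_Ahat: "resolvent Ahat z = (\<lambda>k. resolvent A z k
      + Gamma_z A z0 G z (- inv (Q z) (kadj J (Gamma_z A z0 G (cnj z)) k)))"
begin

lemma bounded_clinear_inv_Q: "bounded_clinear (inv (Q z))"
  using Qz unfolding bdd_invertible_def by blast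

lemma Gamma_z_hat:
  assumes Qz0: "bdd_invertible (Q z0)"
  shows "Gamma_z Ahat z0 (\<lambda>h. - G (inv (Q z0) h)) z h = - Gamma_z A z0 G z (inv (Q z) h)"
proof -
  let ?Gz = "Gamma_z A z0 G z" and ?Gs = "kadj J (Gamma_z A z0 G (cnj z))"
    and ?R = "resolvent A z" and ?Qi = "inv (Q z)"
  have Gz: "bounded_clinear ?Gz" by (rule bounded_clinear_Gamma_z[OF z])
  have Gs: "bounded_clinear ?Gs" by (rule bounded_clinear_kadj_Gamma_z_cnj[OF z])
  have R: "bounded_clinear ?R" by (rule resolvent_setD(1)[OF z])
  have Qi: "bounded_clinear ?Qi" by (rule bounded_clinear_inv_Q)
  define u where "u = inv (Q z0) h"
  have Q_u: "Q z0 u = h"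
    using Qz0 unfolding u_def bdd_invertible_def by (simp add: bij_is_surj surj_f_inv_f)
  have Qi_Q: "?Qi (Q z y) = y" for y
    using Qz unfolding bdd_invertible_def by (simp add: bij_is_inj inv_f_f)
  \<comment> \<open>The perturbation term of the resolvent formula telescopes via \<open>Q z - Q z0\<close>.\<close>
  have "(z - z0) *\<^sub>C ?Gz (?Qi (?Gs (G u))) = ?Gz (?Qi (Q z u - Q z0 u))"
    by (simp add: Q_minus_Q_z0[OF z] bounded_clinear_map_scaleC[OF Gz] bounded_clinear_map_scaleC[OF Qi])
  also have "\<dots> = ?Gz u - ?Gz (?Qi h)"
    by (simp add: Q_u Qi_Q bounded_clinear_map_diff[OF Qi] bounded_clinear_map_diff[OF Gz])
  finally have perturbation: "(z - z0) *\<^sub>C ?Gz (?Qi (?Gs (G u))) = ?Gz u - ?Gz (?Qi h)" .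
  have "resolvent Ahat z (- G u) = - ?R (G u) + ?Gz (?Qi (?Gs (G u)))"
    by (simp add: resolvent_Ahat bounded_clinear_map_minus[OF R] bounded_clinear_map_minus[OF Gs]
        bounded_clinear_map_minus[OF Qi])
  then have "Gamma_z Ahat z0 (\<lambda>h. - G (inv (Q z0) h)) z h
      = - G u + (z - z0) *\<^sub>C (- ?R (G u) + ?Gz (?Qi (?Gs (G u))))"
    unfolding Gamma_z_def[of Ahat] u_def by simp
  also have "\<dots> = - ?Gz u + (z - z0) *\<^sub>C ?Gz (?Qi (?Gs (G u)))"
    by (simp add: Gamma_z_def[of A] algebra_simps)
  also have "\<dots> = - ?Gz (?Qi h)"
    unfolding perturbation by simp
  finally show ?thesis .
qed

lemma Gamma_z_inv_Q_kadj_jordan_chain_sum: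
  assumes chain: "jordan_chain A a l x"
  defines "xz \<equiv> \<Sum>j<l. (z - a) ^ j *\<^sub>C x j"
    and "w \<equiv> resolvent A (cnj z0) (x (l - 1))"
  shows "(z - cnj z0) *\<^sub>C Gamma_z A z0 G z (inv (Q z) (kadj J G xz))
    = xz + (z - a) ^ l *\<^sub>C (w + (z - cnj z0) *\<^sub>C resolvent Ahat z w)"
proof -
  let ?Gz = "Gamma_z A z0 G z" and ?Gs = "kadj J (Gamma_z A z0 G (cnj z))"
    and ?P = "kadj J G" and ?R = "resolvent A z" and ?Qi = "inv (Q z)"
  have Gz: "bounded_clinear ?Gz" by (rule bounded_clinear_Gamma_z[OF z])
  have P: "bounded_clinear ?P" by (rule bounded_clinear_kadj[OF G_bounded])
  have Qi: "bounded_clinear ?Qi" by (rule bounded_clinear_inv_Q)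
  define \<eta> where "\<eta> = x (l - 1)"
  have identity: "w + (z - cnj z0) *\<^sub>C ?R w = ?R \<eta>"
    unfolding w_def \<eta>_def by (rule resolvent_identity[OF resolvent_set_cnj[OF z0_resolvent] z])
  have Rh_w: "resolvent Ahat z w = ?R w - ?Gz (?Qi (?Gs w))"
    by (simp add: resolvent_Ahat bounded_clinear_map_minus[OF Gz] bounded_clinear_map_minus[OF Qi])
  have "?Gs w = ?P (w + (z - cnj z0) *\<^sub>C ?R w)"
    by (simp only: kadj_Gamma_z_cnj[OF z] bounded_clinear_map_add[OF P] bounded_clinear_map_scaleC[OF P])
  then have Gs_w: "?Gs w = ?P (?R \<eta>)" unfolding identity .
  have "(z - a) ^ l *\<^sub>C (w + (z - cnj z0) *\<^sub>C resolvent Ahat z w)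
      = (z - a) ^ l *\<^sub>C (w + (z - cnj z0) *\<^sub>C ?R w)
        - (z - cnj z0) *\<^sub>C ((z - a) ^ l *\<^sub>C ?Gz (?Qi (?P (?R \<eta>))))"
    unfolding Rh_w Gs_w by (simp add: algebra_simps)
  also have "\<dots> = (z - a) ^ l *\<^sub>C ?R \<eta> - (z - cnj z0) *\<^sub>C ?Gz (?Qi (?P ((z - a) ^ l *\<^sub>C ?R \<eta>)))"
    unfolding identity
    by (simp add: bounded_clinear_map_scaleC[OF P] bounded_clinear_map_scaleC[OF Qi]
        bounded_clinear_map_scaleC[OF Gz])
  also have "\<dots> = - xz + (z - cnj z0) *\<^sub>C ?Gz (?Qi (?P xz))"
    unfolding \<eta>_def resolvent_jordan_chain_sum[OF chain z, folded xz_def]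
    by (simp add: bounded_clinear_map_minus[OF P]
        bounded_clinear_map_minus[OF Qi] bounded_clinear_map_minus[OF Gz])
  finally show ?thesis by simp
qed

end

end

theorem lemma3p9:
  fixes J :: "'k::chilbert_space \<Rightarrow> 'k"
    and A Ahat :: "('k \<times> 'k) set"
    and G :: "'h::chilbert_space \<Rightarrow> 'k"
    and Q :: "complex \<Rightarrow> 'h \<Rightarrow> 'h"
    and z0 z :: complex and \<alpha> :: real and l :: nat and x :: "nat \<Rightarrow> 'k"
  assumes J: "pontryagin_symmetry J"
    and A_sa: "selfadjoint_rel J A"
    and z0: "z0 \<in> resolvent_set A" "Im z0 > 0"
    and G: "bounded_clinear G"
    and Q_real: "\<forall>w\<in>resolvent_set A.
        Q w = (\<lambda>h. hadj (Q z0) h + (w - cnj z0) *\<^sub>C kadj J G (Gamma_z A z0 G w h))"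
    and Qz0: "bdd_invertible (Q z0)"
    and Ahat: "\<forall>w\<in>resolvent_set A. bdd_invertible (Q w) \<longrightarrow>
        w \<in> resolvent_set Ahat \<and>
        resolvent Ahat w = (\<lambda>k. resolvent A w k
            + Gamma_z A z0 G w (- inv (Q w) (kadj J (Gamma_z A z0 G (cnj w)) k)))"
    and chain: "jordan_chain A (complex_of_real \<alpha>) l x"
    and z: "z \<in> resolvent_set A" "z \<in> resolvent_set Ahat" "bdd_invertible (Q z)"
    and z_ne: "z \<noteq> cnj z0"
  shows "(let Ghat = (\<lambda>h. - G (inv (Q z0) h));
              xz = (\<Sum>j<l. (z - complex_of_real \<alpha>) ^ j *\<^sub>C x j);
              w = resolvent A (cnj z0) (x (l - 1))
          in Gamma_z Ahat z0 Ghat z (kadj J G xz)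
             = (- 1 / (z - cnj z0)) *\<^sub>C
                 (xz + (z - complex_of_real \<alpha>) ^ l *\<^sub>C (w + (z - cnj z0) *\<^sub>C resolvent Ahat z w)))"
proof -
  interpret realization J A G Q z0
    using J A_sa z0(1) G Q_real by unfold_locales
  have resolvent_Ahat: "resolvent Ahat z = (\<lambda>k. resolvent A z k
      + Gamma_z A z0 G z (- inv (Q z) (kadj J (Gamma_z A z0 G (cnj z)) k)))"
    using Ahat z(1,3) by blast
  have "z - cnj z0 \<noteq> 0" using z_ne by simp
  then show ?thesis
    using Gamma_z_hat[OF z(1,3) resolvent_Ahat Qz0]
      Gamma_z_inv_Q_kadj_jordan_chain_sum[OF z(1,3) resolvent_Ahat chain, symmetric]
    by (simp add: Let_def)
qed

end
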